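(* Suppose $\alpha\neq1$. Then there exists $C\in(0,\infty)$ such that for all $u\in\mathcal F$, $$\mathcal E(u,u)\ge C\int_{\mathbb R^d_+}\frac{u(x)^2}{x_d^{\alpha}}\,dx.$$
   Context: Let $d\ge 1$, $\alpha\in(0,2)$. Write $x=(\widetilde x,x_d)$, $\mathbb R^d_+=\{x:x_d>0\}$. Fix $\beta_1,\beta_2,\beta_3,\beta_4\ge0$ with $\beta_1>0$ if $\beta_3>0$ and $\beta_2>0$ if $\beta_4>0$, and set $$\widetilde B(x,y)=\Big(\tfrac{x_d\wedge y_d}{|x-y|}\wedge1\Big)^{\beta_1}\Big(\tfrac{x_d\vee y_d}{|x-y|}\wedge1\Big)^{\beta_2}\Big[\log\Big(1+\tfrac{(x_d\vee y_d)\wedge|x-y|}{x_d\wedge y_d\wedge|x-y|}\Big)\Big]^{\beta_3}\Big[\log\Big(1+\tfrac{|x-y|}{(x_d\vee y_d)\wedge|x-y|}\Big)\Big]^{\beta_4}.$$ Let $\mathcal B:\mathbb R^d_+\times\mathbb R^d_+\to[0,\infty)$ satisfy: (A1) symmetry; (A2) if $\alpha\ge1$, there exist $\theta>\alpha-1$, $C>0$ with $|\mathcal B(x,x)-\mathcal B(x,y)|\le C(|x-y|/(x_d\wedge y_d))^{\theta}$; (A3) $C^{-1}\widetilde B\le\mathcal B\le C\widetilde B$ for some $C\ge1$; (A4) $\mathcal B(ax,ay)=\mathcal B(x,y)$ for $a>0$ and, if $d\ge2$, $\mathcal B(x+(\widetilde z,0),y+(\widetilde z,0))=\mathcal B(x,y)$;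 and $\mathcal B(x,x)=1$. Let $J(x,y)=|x-y|^{-d-\alpha}\mathcal B(x,y)$, $\mathcal E(u,v)=\frac12\int_{\mathbb R^d_+}\int_{\mathbb R^d_+}(u(x)-u(y))(v(x)-v(y))J(x,y)\,dy\,dx$, and $\mathcal F$ the closure of $C_c^\infty(\mathbb R^d_+)$ under $\mathcal E_1=\mathcal E+(\cdot,\cdot)_{L^2(\mathbb R^d_+,dx)}$. *)

theory Defs
  imports "HOL-Analysis.Analysis"
begin

text \<open>Points of R^d are vectors \<open>real ^ 'n\<close> with d = CARD('n); a distinguished
  coordinate index \<open>k :: 'n\<close> plays the role of the last coordinate x_d.\<close>

definition halfspace :: "'n::finite \<Rightarrow> (real ^ 'n) set" where
  "halfspace k = {x. x $ k > 0}"

fun Ck :: "nat \<Rightarrow> (real ^ 'n::finite \<Rightarrow> real) \<Rightarrow> bool" where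
  "Ck 0 f = continuous_on UNIV f"
| "Ck (Suc m) f = (continuous_on UNIV f \<and>
     (\<forall>i. \<exists>g. (\<forall>x. ((\<lambda>t. f (x + t *\<^sub>R axis i 1)) has_real_derivative g x) (at 0)) \<and> Ck m g))"

definition smooth :: "(real ^ 'n::finite \<Rightarrow> real) \<Rightarrow> bool" where
  "smooth f = (\<forall>m. Ck m f)"

definition Cc_inf_half :: "'n::finite \<Rightarrow> (real ^ 'n \<Rightarrow> real) set" where
  "Cc_inf_half k = {f. smooth f \<and> compact (closure {x. f x \<noteq> 0}) \<and>
                       closure {x. f x \<noteq> 0} \<subseteq> halfspace k}"

definition Btilde :: "'n::finite \<Rightarrow> real \<Rightarrow> real \<Rightarrow> real \<Rightarrow> real \<Rightarrow> real ^ 'n \<Rightarrow> real ^ 'n \<Rightarrow> real" where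
  "Btilde k b1 b2 b3 b4 x y =
     (let r = dist x y; m = min (x $ k) (y $ k); M = max (x $ k) (y $ k) in
      (min (m / r) 1) powr b1 * (min (M / r) 1) powr b2 *
      (ln (1 + min M r / min m r)) powr b3 * (ln (1 + r / min M r)) powr b4)"

definition Jk :: "real \<Rightarrow> (real ^ 'n::finite \<Rightarrow> real ^ 'n \<Rightarrow> real) \<Rightarrow> real ^ 'n \<Rightarrow> real ^ 'n \<Rightarrow> real" where
  "Jk \<alpha> B x y = dist x y powr (- real CARD('n) - \<alpha>) * B x y"

text \<open>Quadratic form \<open>\<E>(u,u)\<close> (nonnegative integrand, so stated as an extended nonnegative integral).\<close>
definition Eform :: "'n::finite \<Rightarrow> real \<Rightarrow> (real ^ 'n \<Rightarrow> real ^ 'n \<Rightarrow> real) \<Rightarrow> (real ^ 'n \<Rightarrow> real) \<Rightarrow> ennreal" where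
  "Eform k \<alpha> B u = ennreal (1/2) *
     (\<integral>\<^sup>+ x. (\<integral>\<^sup>+ y. ennreal ((u x - u y)^2 * Jk \<alpha> B x y) * indicator (halfspace k) y \<partial>lborel)
              * indicator (halfspace k) x \<partial>lborel)"

definition E1form :: "'n::finite \<Rightarrow> real \<Rightarrow> (real ^ 'n \<Rightarrow> real ^ 'n \<Rightarrow> real) \<Rightarrow> (real ^ 'n \<Rightarrow> real) \<Rightarrow> ennreal" where
  "E1form k \<alpha> B u = Eform k \<alpha> B u + (\<integral>\<^sup>+ x. ennreal ((u x)^2) * indicator (halfspace k) x \<partial>lborel)"

text \<open>\<open>\<F>\<close>: closure of C_c^\<infinity>(R^d_+) w.r.t. \<open>\<E>_1\<close> (Borel representatives).\<close>
definition Fdom :: "'n::finite \<Rightarrow> real \<Rightarrow> (real ^ 'n \<Rightarrow> real ^ 'n \<Rightarrow> real) \<Rightarrow> (real ^ 'n \<Rightarrow> real) set" where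
  "Fdom k \<alpha> B = {u. u \<in> borel_measurable lborel \<and>
      (\<exists>\<phi>. (\<forall>j. \<phi> j \<in> Cc_inf_half k) \<and> (\<lambda>j. E1form k \<alpha> B (\<lambda>x. u x - \<phi> j x)) \<longlonglongrightarrow> 0)}"

end

theory Submission
  imports Defs "HOL-Library.Nat_Bijection"
begin

text \<open>
  Write H(u) for the Hardy integral of u and x_d for x$k. Dilating the normal coordinate by a factor s
  changes H(u) by s^(\<alpha>-1), which is < 1 for s slightly above 2 if \<alpha> < 1 and for s slightly
  below 1/2 if \<alpha> > 1. Combined with u(x)^2 \<le> (1+\<epsilon>) u(Px)^2 + (1+1/\<epsilon>) (u(x) - u(Px))^2
  for the dilated point Px, this gives H(u) \<le> p H(u) + C \<integral> (u(x) - u(Px))^2 / x_d^\<alpha> with p < 1,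
  and for finite H(u) the first term is absorbed. The dilation is combined with a transverse
  shift of size comparable to x_d; averaging the defect over dilation factors and shifts in a
  box turns it into the double integral of (u(x) - u(y))^2 |x-y|^(-d-\<alpha>) over the region
  |x-y| \<le> L min(x_d, y_d), where Btilde and hence B is bounded below. The shift is taken at the
  dyadic scale 2^\<lfloor>log_2 x_d\<rfloor>, so that on each dyadic layer x \<mapsto> Px is diagonal affine and
  both changes of variables are elementary. Test functions have finite H, and the inequality
  passes to Fdom by approximation on the truncated regions {x_d > \<delta>}. Of the hypotheses on
  B only the lower bound in (A3) enters, and only near the diagonal.
\<close>

lemma ennreal_absorb_le:
  fixes H X :: ennreal and p :: real
  assumes "H \<le> ennreal p * H + X" "H < \<infinity>" "0 \<le> p" "p < 1"
  shows "ennreal (1 - p) * H \<le> X"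
proof -
  obtain h where h: "H = ennreal h" "0 \<le> h" using assms(2) by (cases H) auto
  show ?thesis
  proof (cases X)
    case (real x)
    have "ennreal h \<le> ennreal (p * h + x)"
      using assms(1,3) h real by (simp add: ennreal_mult[symmetric] ennreal_plus[symmetric] del: ennreal_plus)
    then have "h \<le> p * h + x" using real assms(3) h by (subst (asm) ennreal_le_iff) auto
    then have "(1 - p) * h \<le> x" by (simp add: algebra_simps)
    then show ?thesis using real h assms by (simp add: ennreal_mult[symmetric] ennreal_leI)
  qed simp
qed

lemma ennreal_le_inverse_mult_if_mult_le:
  fixes H X :: ennreal
  assumes "0 < c" "ennreal c * H \<le> X"
  shows "H \<le> ennreal (1 / c) * X"
proof -
  have "H = ennreal (1 / c) * (ennreal c * H)"
    using assms(1) by (simp add: mult.assoc[symmetric] ennreal_mult[symmetric])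
  also have "\<dots> \<le> ennreal (1 / c) * X"
    using assms(2) by (rule mult_left_mono) simp
  finally show ?thesis .
qed

lemma ennreal_inverse_add_one_mult_le:
  fixes H E :: ennreal
  assumes K: "0 \<le> K" and le: "H \<le> ennreal K * E"
  shows "ennreal (1 / (K + 1)) * H \<le> E"
proof -
  have "ennreal (1 / (K + 1)) * H \<le> ennreal (1 / (K + 1)) * (ennreal K * E)"
    using le by (rule mult_left_mono) simp
  also have "\<dots> = ennreal (K / (K + 1)) * E"
    using K by (simp add: mult.assoc[symmetric] ennreal_mult[symmetric])
  also have "\<dots> \<le> 1 * E"
    using K by (intro mult_right_mono) (simp_all add: ennreal_le_1)
  finally show ?thesis by simp
qed

lemma power2_le_weighted_split:
  fixes v w e :: real
  assumes "0 < e"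
  shows "v^2 \<le> (1 + e) * w^2 + (1 + 1/e) * (v - w)^2"
proof -
  have "0 \<le> (sqrt e * w - (v - w) / sqrt e)^2" by simp
  also have "\<dots> = e * w^2 - 2 * w * (v - w) + (v - w)^2 / e"
    using assms by (simp add: power2_eq_square field_simps)
  finally have "2 * w * (v - w) \<le> e * w^2 + (v - w)^2 / e" by simp
  moreover have "v^2 = (v - w)^2 + 2 * w * (v - w) + w^2" by (simp add: power2_eq_square algebra_simps)
  ultimately show ?thesis by (simp add: distrib_right)
qed

lemma inverse_powr_le_distance_powr:
  fixes x r L D \<alpha> :: real
  assumes "0 < x" "0 < r" "r \<le> L * x" "0 \<le> D + \<alpha>"
  shows "1 / x powr \<alpha> \<le> x powr D * L powr (D + \<alpha>) * r powr (- D - \<alpha>)"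
proof -
  have "0 < L * x" using assms by linarith
  then have L: "0 < L" using assms by (simp add: zero_less_mult_iff)
  have "1 / x powr \<alpha> = x powr D * L powr (D + \<alpha>) * (L * x) powr (- D - \<alpha>)"
    using assms L by (simp add: powr_mult powr_minus powr_add powr_diff divide_simps)
  also have "\<dots> \<le> x powr D * L powr (D + \<alpha>) * r powr (- D - \<alpha>)"
    using assms by (intro mult_left_mono powr_mono2') auto
  finally show ?thesis .
qed

section \<open>Diagonal affine changes of variables\<close>

lemma Basis_cart_range: "(Basis :: (real^'n::finite) set) = range (\<lambda>i. axis i 1)"
  by (auto simp: Basis_vec_def)

lemma sum_Basis_cart: "(\<Sum>j\<in>(Basis :: (real^'n::finite) set). f j) = (\<Sum>i\<in>UNIV. f (axis i 1))"
  unfolding Basis_cart_range by (subst sum.reindex) (auto simp: inj_on_def axis_eq_axis)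

lemma prod_Basis_cart: "(\<Prod>j\<in>(Basis :: (real^'n::finite) set). f j) = (\<Prod>i\<in>UNIV. f (axis i 1))"
  unfolding Basis_cart_range by (subst prod.reindex) (auto simp: inj_on_def axis_eq_axis)

lemma nn_integral_lborel_affine_cart:
  fixes c :: "'n::finite \<Rightarrow> real" and t :: "real^'n"
  assumes c: "\<And>i. c i \<noteq> 0" and g[measurable]: "g \<in> borel_measurable borel"
  shows "(\<integral>\<^sup>+y. g y \<partial>lborel) = ennreal (\<Prod>i\<in>UNIV. \<bar>c i\<bar>) * (\<integral>\<^sup>+x. g (t + (\<chi> i. c i * x$i)) \<partial>lborel)"
proof -
  define c' where "c' j = (\<Sum>i\<in>UNIV. c i * (j::real^'n) $ i)" for j
  have c'_axis: "c' (axis i 1) = c i" for i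
    unfolding c'_def by (simp add: axis_def if_distrib cong: if_cong)
  have "(\<Sum>i\<in>UNIV. (c i * x$i) *\<^sub>R axis i (1::real)) = (\<chi> i. c i * x$i)" for x :: "real^'n"
    by (simp add: vec_eq_iff sum_component axis_def if_distrib cong: if_cong)
  then have map_eq: "t + (\<Sum>j\<in>Basis. (c' j * (x \<bullet> j)) *\<^sub>R j) = t + (\<chi> i. c i * x$i)" for x :: "real^'n"
    by (simp add: sum_Basis_cart c'_axis cart_eq_inner_axis[symmetric])
  have "lborel = density (distr lborel borel (\<lambda>x. t + (\<Sum>j\<in>Basis. (c' j * (x \<bullet> j)) *\<^sub>R j))) (\<lambda>_. (\<Prod>j\<in>Basis. \<bar>c' j\<bar>))"
    by (rule lborel_affine_euclidean) (auto simp: Basis_cart_range c'_axis c)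
  also have "\<dots> = density (distr lborel borel (\<lambda>x. t + (\<chi> i. c i * x$i))) (\<lambda>_. (\<Prod>i\<in>UNIV. \<bar>c i\<bar>))"
    by (simp add: map_eq prod_Basis_cart c'_axis)
  finally have lborel_eq: "lborel = \<dots>" .
  have [measurable]: "(\<lambda>x. t + (\<chi> i. c i * x$i)) \<in> borel_measurable borel"
    by (intro borel_measurable_continuous_onI continuous_intros)
  show ?thesis
    by (subst lborel_eq) (simp add: nn_integral_density nn_integral_distr nn_integral_cmult)
qed

lemma measurable_vec_lambda:
  assumes "\<And>i. (\<lambda>x. f x i) \<in> borel_measurable M"
  shows "(\<lambda>x. (\<chi> i. f x i) :: real^'n::finite) \<in> borel_measurable M"
  using assms by (subst borel_measurable_euclidean_space) (auto simp: Basis_cart_range cart_eq_inner_axis[symmetric])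

lemma vec_nth_measurable[measurable]: "(\<lambda>x::real^'n::finite. x $ i) \<in> borel_measurable borel"
  by (intro borel_measurable_continuous_onI continuous_intros)

lemma halfspace_sets[measurable]: "halfspace k \<in> sets borel"
  unfolding halfspace_def by measurable

section \<open>Hardy integral and the dyadic shift\<close>

definition hardy_integral :: "'n::finite \<Rightarrow> real \<Rightarrow> (real^'n \<Rightarrow> real) \<Rightarrow> ennreal" where
  "hardy_integral k \<alpha> u = (\<integral>\<^sup>+ x. ennreal ((u x)^2 / (x $ k) powr \<alpha>) * indicator (halfspace k) x \<partial>lborel)"

definition dyadic_scale :: "'n::finite \<Rightarrow> real^'n \<Rightarrow> real" where
  "dyadic_scale k x = 2 powr real_of_int \<lfloor>log 2 (x$k)\<rfloor>"

definition dyadic_shift :: "'n::finite \<Rightarrow> real^'n \<Rightarrow> real^'n \<Rightarrow> real^'n" where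
  "dyadic_shift k z x = (\<chi> i. if i = k then z$k * x$k else x$i + dyadic_scale k x * z$i)"

definition dyadic_band :: "'n::finite \<Rightarrow> real \<Rightarrow> int \<Rightarrow> (real^'n) set" where
  "dyadic_band k s j = {x. 0 < x$k \<and> \<lfloor>log 2 (x$k / s)\<rfloor> = j}"

lemma dyadic_scale_measurable[measurable]: "dyadic_scale k \<in> borel_measurable borel"
  unfolding dyadic_scale_def by measurable

lemma dyadic_shift_measurable_pair[measurable]:
  "(\<lambda>(z, x). dyadic_shift k z x) \<in> borel_measurable (borel \<Otimes>\<^sub>M borel)"
proof -
  have "(\<lambda>p. dyadic_shift k (fst p) (snd p)) \<in> borel_measurable (borel \<Otimes>\<^sub>M borel)"
    unfolding dyadic_shift_def by (rule measurable_vec_lambda) measurable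
  then show ?thesis by (simp add: split_beta')
qed

lemma dyadic_shift_measurable[measurable]: "dyadic_shift k z \<in> borel_measurable borel"
  unfolding dyadic_shift_def by (rule measurable_vec_lambda) measurable

lemma dyadic_band_sets[measurable]: "dyadic_band k s j \<in> sets borel"
  unfolding dyadic_band_def by measurable

lemma dyadic_scale_bounds:
  assumes "0 < x$k"
  shows "0 < dyadic_scale k x" "dyadic_scale k x \<le> x$k" "x$k < 2 * dyadic_scale k x"
proof -
  have "2 powr real_of_int \<lfloor>log 2 (x$k)\<rfloor> \<le> 2 powr log 2 (x$k)"
    by (intro powr_mono) auto
  then show "dyadic_scale k x \<le> x$k" using assms by (simp add: dyadic_scale_def)
  have "2 powr log 2 (x$k) < 2 powr (real_of_int \<lfloor>log 2 (x$k)\<rfloor> + 1)"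
    by (intro powr_less_mono) auto
  then show "x$k < 2 * dyadic_scale k x" using assms by (simp add: dyadic_scale_def powr_add)
  show "0 < dyadic_scale k x" by (simp add: dyadic_scale_def)
qed

lemma nn_integral_halfspace_dyadic_bands:
  fixes f :: "real^'n::finite \<Rightarrow> ennreal"
  assumes [measurable]: "f \<in> borel_measurable borel"
  shows "(\<integral>\<^sup>+x. f x * indicator (halfspace k) x \<partial>lborel)
       = (\<Sum>n. \<integral>\<^sup>+x. f x * indicator (dyadic_band k s (int_decode n)) x \<partial>lborel)"
proof -
  have disjoint: "disjoint_family (\<lambda>n. dyadic_band k s (int_decode n))"
    unfolding disjoint_family_on_def dyadic_band_def by (auto simp: inj_int_decode[THEN inj_eq])
  have "(\<Union>n. dyadic_band k s (int_decode n)) = halfspace k"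
  proof (intro set_eqI iffI)
    fix x assume "x \<in> halfspace k"
    then have "x \<in> dyadic_band k s (int_decode (int_encode \<lfloor>log 2 (x$k / s)\<rfloor>))"
      by (simp add: dyadic_band_def halfspace_def)
    then show "x \<in> (\<Union>n. dyadic_band k s (int_decode n))" by blast
  qed (auto simp: dyadic_band_def halfspace_def)
  then have "(\<integral>\<^sup>+x. f x * indicator (halfspace k) x \<partial>lborel)
      = (\<integral>\<^sup>+x. (\<Sum>n. f x * indicator (dyadic_band k s (int_decode n)) x) \<partial>lborel)"
    by (simp add: suminf_indicator[OF disjoint])
  also have "\<dots> = (\<Sum>n. \<integral>\<^sup>+x. f x * indicator (dyadic_band k s (int_decode n)) x \<partial>lborel)"
    by (rule nn_integral_suminf) measurable
  finally show ?thesis .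
qed

text \<open>On the band where \<open>x$k\<close> lies in \<open>[2^j, 2^(j+1))\<close> the dyadic scale is the constant
  \<open>2^j\<close>, so there \<open>dyadic_shift k z\<close> is a diagonal affine map with Jacobian \<open>z$k\<close>.\<close>

lemma nn_integral_dyadic_shift_band:
  fixes f :: "real^'n::finite \<Rightarrow> ennreal"
  assumes z: "0 < z$k" and f[measurable]: "f \<in> borel_measurable borel"
  shows "(\<integral>\<^sup>+x. f (dyadic_shift k z x) * indicator (dyadic_band k 1 j) x \<partial>lborel)
       = ennreal (1 / z$k) * (\<integral>\<^sup>+y. f y * indicator (dyadic_band k (z$k) j) y \<partial>lborel)"
proof -
  define c where "c i = (if i = k then z$k else 1)" for i
  define t where "t = (\<chi> i. if i = k then 0 else 2 powr j * z$i)"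
  define g where "g y = f y * indicator (dyadic_band k (z$k) j) y" for y
  have [measurable]: "g \<in> borel_measurable borel" unfolding g_def by measurable
  have "(t + (\<chi> i. c i * x$i)) $ k = z$k * x$k" for x
    by (simp add: t_def c_def)
  then have band_iff: "t + (\<chi> i. c i * x$i) \<in> dyadic_band k (z$k) j \<longleftrightarrow> x \<in> dyadic_band k 1 j" for x
    using z by (auto simp: dyadic_band_def zero_less_mult_iff)
  have "t + (\<chi> i. c i * x$i) = dyadic_shift k z x" if "x \<in> dyadic_band k 1 j" for x
  proof -
    have "dyadic_scale k x = 2 powr j" using that by (simp add: dyadic_band_def dyadic_scale_def)
    then show ?thesis by (simp add: vec_eq_iff dyadic_shift_def t_def c_def mult.commute)
  qed
  then have g_affine: "g (t + (\<chi> i. c i * x$i)) = f (dyadic_shift k z x) * indicator (dyadic_band k 1 j) x" for x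
    using band_iff[of x] by (cases "x \<in> dyadic_band k 1 j") (simp_all add: g_def)
  have "(\<Prod>i\<in>UNIV. \<bar>c i\<bar>) = (\<Prod>i\<in>UNIV. if i = k then z$k else 1)"
    using z by (intro prod.cong) (auto simp: c_def)
  then have jacobian: "(\<Prod>i\<in>UNIV. \<bar>c i\<bar>) = z$k" by (simp add: prod.delta)
  have c0: "c i \<noteq> 0" for i
    using z by (simp add: c_def)
  have "(\<integral>\<^sup>+y. g y \<partial>lborel) = ennreal (z$k) * (\<integral>\<^sup>+x. f (dyadic_shift k z x) * indicator (dyadic_band k 1 j) x \<partial>lborel)"
    using nn_integral_lborel_affine_cart[where c=c and g=g and t=t, OF c0] by (simp add: g_affine jacobian)
  then show ?thesis
    using z by (simp add: g_def mult.assoc[symmetric] ennreal_mult[symmetric])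
qed

lemma nn_integral_dyadic_shift:
  fixes f :: "real^'n::finite \<Rightarrow> ennreal"
  assumes z: "0 < z$k" and f[measurable]: "f \<in> borel_measurable borel"
  shows "(\<integral>\<^sup>+x. f (dyadic_shift k z x) * indicator (halfspace k) x \<partial>lborel)
       = ennreal (1 / z$k) * (\<integral>\<^sup>+y. f y * indicator (halfspace k) y \<partial>lborel)"
proof -
  have "(\<integral>\<^sup>+x. f (dyadic_shift k z x) * indicator (halfspace k) x \<partial>lborel)
      = (\<Sum>n. \<integral>\<^sup>+x. f (dyadic_shift k z x) * indicator (dyadic_band k 1 (int_decode n)) x \<partial>lborel)"
    by (rule nn_integral_halfspace_dyadic_bands) measurable
  also have "\<dots> = (\<Sum>n. ennreal (1 / z$k) * (\<integral>\<^sup>+y. f y * indicator (dyadic_band k (z$k) (int_decode n)) y \<partial>lborel))"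
    using z by (simp add: nn_integral_dyadic_shift_band)
  also have "\<dots> = ennreal (1 / z$k) * (\<integral>\<^sup>+y. f y * indicator (halfspace k) y \<partial>lborel)"
    by (simp add: nn_integral_halfspace_dyadic_bands[of f k "z$k"])
  finally show ?thesis .
qed

lemma hardy_integral_dyadic_shift:
  fixes u :: "real^'n::finite \<Rightarrow> real"
  assumes [measurable]: "u \<in> borel_measurable borel" and z: "0 < z$k"
  shows "(\<integral>\<^sup>+x. ennreal ((u (dyadic_shift k z x))^2 / (x$k) powr \<alpha>) * indicator (halfspace k) x \<partial>lborel)
       = ennreal ((z$k) powr (\<alpha> - 1)) * hardy_integral k \<alpha> u"
proof -
  define f where "f y = ennreal ((z$k) powr \<alpha>) * ennreal ((u y)^2 / (y$k) powr \<alpha>)" for y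
  have [measurable]: "f \<in> borel_measurable borel" unfolding f_def by measurable
  have "f (dyadic_shift k z x) = ennreal ((u (dyadic_shift k z x))^2 / (x$k) powr \<alpha>)" if "0 < x$k" for x
    using z that by (simp add: f_def dyadic_shift_def ennreal_mult[symmetric] powr_mult)
  then have "(\<integral>\<^sup>+x. ennreal ((u (dyadic_shift k z x))^2 / (x$k) powr \<alpha>) * indicator (halfspace k) x \<partial>lborel)
      = (\<integral>\<^sup>+x. f (dyadic_shift k z x) * indicator (halfspace k) x \<partial>lborel)"
    by (intro nn_integral_cong) (simp add: halfspace_def split: split_indicator)
  also have "\<dots> = ennreal (1 / z$k) * (\<integral>\<^sup>+y. f y * indicator (halfspace k) y \<partial>lborel)"
    using z by (rule nn_integral_dyadic_shift) measurable
  also have "(\<integral>\<^sup>+y. f y * indicator (halfspace k) y \<partial>lborel) = ennreal ((z$k) powr \<alpha>) * hardy_integral k \<alpha> u"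
    unfolding f_def hardy_integral_def by (simp add: mult.assoc nn_integral_cmult)
  also have "ennreal (1 / z$k) * (ennreal ((z$k) powr \<alpha>) * hardy_integral k \<alpha> u)
      = ennreal ((z$k) powr (\<alpha> - 1)) * hardy_integral k \<alpha> u"
  proof -
    have "ennreal (1 / z$k) * ennreal ((z$k) powr \<alpha>) = ennreal ((z$k) powr (\<alpha> - 1))"
      using z by (simp add: ennreal_mult[symmetric] powr_diff)
    then show ?thesis by (simp add: mult.assoc[symmetric])
  qed
  finally show ?thesis .
qed

section \<open>Near-diagonal energy\<close>

text \<open>Dilation factors in \<open>[1/3, 3]\<close> keep the shifted point at height comparable to \<open>x$k\<close>,
  and excluding \<open>1\<close> keeps it away from \<open>x\<close>.\<close>

definition admissible_window :: "real \<Rightarrow> real \<Rightarrow> bool" where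
  "admissible_window a b \<longleftrightarrow> 1/3 \<le> a \<and> a < b \<and> b \<le> 3 \<and> (b \<le> 1 \<or> 1 \<le> a)"

definition window_box :: "'n::finite \<Rightarrow> real \<Rightarrow> real \<Rightarrow> (real^'n) set" where
  "window_box k a b = box (\<chi> i. if i = k then a else -1) (\<chi> i. if i = k then b else 1)"

definition near_kernel :: "'n::finite \<Rightarrow> real \<Rightarrow> real \<Rightarrow> real^'n \<Rightarrow> real^'n \<Rightarrow> real" where
  "near_kernel k \<alpha> L x y =
     (if 0 < x$k \<and> 0 < y$k \<and> x \<noteq> y \<and> dist x y \<le> L * min (x$k) (y$k)
      then dist x y powr (- real CARD('n) - \<alpha>) else 0)"

definition near_energy :: "'n::finite \<Rightarrow> real \<Rightarrow> real \<Rightarrow> (real^'n \<Rightarrow> real) \<Rightarrow> ennreal" where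
  "near_energy k \<alpha> L u = (\<integral>\<^sup>+x. \<integral>\<^sup>+y. ennreal ((u x - u y)^2 * near_kernel k \<alpha> L x y) \<partial>lborel \<partial>lborel)"

lemma window_box_sets[measurable]: "window_box k a b \<in> sets borel"
  by (simp add: window_box_def)

lemma mem_window_box:
  "z \<in> window_box k a b \<longleftrightarrow> a < z$k \<and> z$k < b \<and> (\<forall>i. i \<noteq> k \<longrightarrow> \<bar>z$i\<bar> < 1)"
  by (auto simp: window_box_def mem_box_cart abs_less_iff)

lemma emeasure_window_box:
  assumes "a < b"
  shows "emeasure lborel (window_box k a b) = ennreal (\<Prod>i\<in>UNIV. if i = k then b - a else 2)"
proof -
  have "emeasure lborel (window_box k a b)
      = (\<Prod>j\<in>Basis. ((\<chi> i. if i = k then b else 1) - (\<chi> i. if i = k then a else -1)) \<bullet> j)"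
    unfolding window_box_def using assms
    by (intro emeasure_lborel_box) (auto simp: Basis_cart_range inner_axis)
  also have "\<dots> = ennreal (\<Prod>i\<in>UNIV. if i = k then b - a else 2)"
    by (simp add: prod_Basis_cart cart_eq_inner_axis[symmetric])
      (rule arg_cong[where f=ennreal], rule prod.cong, auto)
  finally show ?thesis .
qed

lemma near_kernel_measurable[measurable]:
  "(\<lambda>(x, y). near_kernel k \<alpha> L x y) \<in> borel_measurable (borel \<Otimes>\<^sub>M borel)"
  unfolding near_kernel_def by measurable

lemma near_kernel_nonneg: "0 \<le> near_kernel k \<alpha> L x y"
  by (simp add: near_kernel_def)

lemma dyadic_shift_near:
  fixes x z :: "real^'n::finite"
  assumes x: "0 < x$k" and z: "z \<in> window_box k a b" and ab: "admissible_window a b"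
  shows "0 < dyadic_shift k z x $ k" "dyadic_shift k z x \<noteq> x"
    "dist x (dyadic_shift k z x) \<le> 2 * real CARD('n) * x$k" "x$k \<le> 3 * dyadic_shift k z x $ k"
proof -
  have zk: "a < z$k" "z$k < b" and zi: "\<And>i. i \<noteq> k \<Longrightarrow> \<bar>z$i\<bar> < 1"
    using z by (auto simp: mem_window_box)
  have ab': "1/3 \<le> a" "a < b" "b \<le> 3" "b \<le> 1 \<or> 1 \<le> a"
    using ab by (auto simp: admissible_window_def)
  have shift_k: "dyadic_shift k z x $ k = z$k * x$k" by (simp add: dyadic_shift_def)
  show "0 < dyadic_shift k z x $ k" "x$k \<le> 3 * dyadic_shift k z x $ k"
    using zk ab' x by (simp_all add: shift_k)
  have "z$k \<noteq> 1" using zk ab' by auto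
  then have "dyadic_shift k z x $ k \<noteq> x $ k" using x by (simp add: shift_k)
  then show "dyadic_shift k z x \<noteq> x" by metis
  have component: "\<bar>(x - dyadic_shift k z x) $ i\<bar> \<le> 2 * x$k" for i
  proof (cases "i = k")
    case True
    have "x$k - z$k * x$k = (1 - z$k) * x$k" by (simp add: algebra_simps)
    then have "\<bar>(x - dyadic_shift k z x) $ i\<bar> = \<bar>1 - z$k\<bar> * x$k"
      using True x by (simp add: shift_k abs_mult)
    also have "\<dots> \<le> 2 * x$k" using zk ab' x by (intro mult_right_mono) auto
    finally show ?thesis .
  next
    case False
    have "\<bar>(x - dyadic_shift k z x) $ i\<bar> = dyadic_scale k x * \<bar>z$i\<bar>"
      using False dyadic_scale_bounds(1)[OF x] by (simp add: dyadic_shift_def abs_mult)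
    also have "\<dots> \<le> x$k * 1"
      using dyadic_scale_bounds[OF x] zi[OF False] by (intro mult_mono) auto
    finally show ?thesis using x by simp
  qed
  have "dist x (dyadic_shift k z x) \<le> (\<Sum>i\<in>UNIV. \<bar>(x - dyadic_shift k z x) $ i\<bar>)"
    unfolding dist_norm by (rule norm_le_l1_cart)
  also have "\<dots> \<le> (\<Sum>i\<in>(UNIV::'n set). 2 * x$k)" by (intro sum_mono component)
  finally show "dist x (dyadic_shift k z x) \<le> 2 * real CARD('n) * x$k" by simp
qed

definition dyadic_jacobian :: "'n::finite \<Rightarrow> real^'n \<Rightarrow> real" where
  "dyadic_jacobian k x = (\<Prod>i\<in>UNIV. if i = k then x$k else dyadic_scale k x)"

lemma dyadic_jacobian_bounds:
  fixes x :: "real^'n::finite"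
  assumes x: "0 < x$k"
  shows "0 < dyadic_jacobian k x" "(x$k) powr real CARD('n) \<le> 2 powr real CARD('n) * dyadic_jacobian k x"
proof -
  show "0 < dyadic_jacobian k x"
    unfolding dyadic_jacobian_def using x dyadic_scale_bounds[OF x] by (intro prod_pos) auto
  have "(x$k/2) powr real CARD('n) = (\<Prod>i\<in>(UNIV::'n set). x$k/2)" using x by (simp add: powr_realpow)
  also have "\<dots> \<le> dyadic_jacobian k x" unfolding dyadic_jacobian_def
    using x dyadic_scale_bounds[OF x] by (intro prod_mono) auto
  finally show "(x$k) powr real CARD('n) \<le> 2 powr real CARD('n) * dyadic_jacobian k x"
    using x by (simp add: powr_divide divide_le_eq mult.commute)
qed

lemma nn_integral_dyadic_shift_parameter:
  fixes g :: "real^'n::finite \<Rightarrow> ennreal"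
  assumes x: "0 < x$k" and [measurable]: "g \<in> borel_measurable borel"
  shows "(\<integral>\<^sup>+y. g y \<partial>lborel) = ennreal (dyadic_jacobian k x) * (\<integral>\<^sup>+z. g (dyadic_shift k z x) \<partial>lborel)"
proof -
  define c where "c i = (if i = k then x$k else dyadic_scale k x)" for i
  define t where "t = (\<chi> i. if i = k then 0 else x$i)"
  have c0: "c i \<noteq> 0" for i using x dyadic_scale_bounds[OF x] by (simp add: c_def)
  have "dyadic_shift k z x = t + (\<chi> i. c i * z$i)" for z
    by (simp add: vec_eq_iff dyadic_shift_def t_def c_def mult.commute)
  moreover have "(\<Prod>i\<in>UNIV. \<bar>c i\<bar>) = dyadic_jacobian k x"
    unfolding dyadic_jacobian_def c_def using x dyadic_scale_bounds[OF x] by (intro prod.cong) auto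
  ultimately show ?thesis
    using nn_integral_lborel_affine_cart[where c=c and g=g and t=t, OF c0] by simp
qed

lemma inverse_powr_le_near_kernel_dyadic_shift:
  fixes x z :: "real^'n::finite"
  defines "D \<equiv> real CARD('n)"
  assumes x: "0 < x$k" and z: "z \<in> window_box k a b" and ab: "admissible_window a b" and \<alpha>: "0 \<le> \<alpha>"
  shows "1 / (x$k) powr \<alpha>
    \<le> dyadic_jacobian k x * (2 powr D * (2*D) powr (D + \<alpha>)) * near_kernel k \<alpha> (6*D) x (dyadic_shift k z x)"
proof -
  define y where "y = dyadic_shift k z x"
  note near = dyadic_shift_near[OF x z ab, folded y_def D_def]
  have D1: "1 \<le> D" by (simp add: D_def Suc_le_eq)
  have "2 * D * x$k \<le> 6 * D * x$k" "2 * D * x$k \<le> 6 * D * y$k"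
    using near x D1 by auto
  then have "dist x y \<le> 6 * D * min (x$k) (y$k)"
    using near by (auto simp: min_def)
  then have W: "near_kernel k \<alpha> (6*D) x y = dist x y powr (- D - \<alpha>)"
    using x near by (simp add: near_kernel_def D_def dist_commute)
  have "1 / (x$k) powr \<alpha> \<le> (x$k) powr D * (2*D) powr (D + \<alpha>) * dist x y powr (- D - \<alpha>)"
    using near x D1 \<alpha> by (intro inverse_powr_le_distance_powr) (auto simp: D_def)
  also have "\<dots> \<le> (2 powr D * dyadic_jacobian k x) * (2*D) powr (D + \<alpha>) * dist x y powr (- D - \<alpha>)"
    using dyadic_jacobian_bounds[OF x] by (intro mult_right_mono) (auto simp: D_def)
  finally show ?thesis
    unfolding y_def[symmetric] W by (simp add: mult_ac)
qed

lemma nn_integral_shift_difference_le_near_energy: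
  fixes u :: "real^'n::finite \<Rightarrow> real" and x :: "real^'n"
  defines "D \<equiv> real CARD('n)"
  assumes [measurable]: "u \<in> borel_measurable borel" and x: "0 < x$k" and \<alpha>: "0 \<le> \<alpha>"
    and ab: "admissible_window a b"
  shows "(\<integral>\<^sup>+z. ennreal ((u x - u (dyadic_shift k z x))^2 / (x$k) powr \<alpha>) * indicator (window_box k a b) z \<partial>lborel)
     \<le> ennreal (2 powr D * (2*D) powr (D + \<alpha>)) *
        (\<integral>\<^sup>+y. ennreal ((u x - u y)^2 * near_kernel k \<alpha> (6*D) x y) \<partial>lborel)"
proof -
  define M where "M = 2 powr D * (2*D) powr (D + \<alpha>)"
  define J where "J = dyadic_jacobian k x"
  define g where "g y = ennreal ((u x - u y)^2 * near_kernel k \<alpha> (6*D) x y)" for y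
  have [measurable]: "g \<in> borel_measurable borel" unfolding g_def by measurable
  have J0: "0 < J" using dyadic_jacobian_bounds(1)[OF x] by (simp add: J_def)
  have "ennreal ((u x - u (dyadic_shift k z x))^2 / (x$k) powr \<alpha>) \<le> ennreal (J * M) * g (dyadic_shift k z x)"
    if "z \<in> window_box k a b" for z
  proof -
    have "(u x - u (dyadic_shift k z x))^2 * (1 / (x$k) powr \<alpha>)
        \<le> (u x - u (dyadic_shift k z x))^2 * (J * M * near_kernel k \<alpha> (6*D) x (dyadic_shift k z x))"
      using inverse_powr_le_near_kernel_dyadic_shift[OF x that ab \<alpha>]
      by (intro mult_left_mono) (simp_all add: J_def M_def D_def)
    then show ?thesis
      using J0 near_kernel_nonneg[of k \<alpha> "6*D" x "dyadic_shift k z x"]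
      by (simp add: g_def ennreal_mult[symmetric] M_def mult_ac ennreal_leI)
  qed
  then have "(\<integral>\<^sup>+z. ennreal ((u x - u (dyadic_shift k z x))^2 / (x$k) powr \<alpha>) * indicator (window_box k a b) z \<partial>lborel)
      \<le> (\<integral>\<^sup>+z. ennreal (J * M) * g (dyadic_shift k z x) \<partial>lborel)"
    by (intro nn_integral_mono) (auto split: split_indicator)
  also have "\<dots> = ennreal (J * M) * (\<integral>\<^sup>+z. g (dyadic_shift k z x) \<partial>lborel)"
    by (rule nn_integral_cmult) measurable
  also have "\<dots> = ennreal M * (ennreal J * (\<integral>\<^sup>+z. g (dyadic_shift k z x) \<partial>lborel))"
    using J0 by (simp add: ennreal_mult M_def mult_ac)
  also have "\<dots> = ennreal M * (\<integral>\<^sup>+y. g y \<partial>lborel)"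
    using nn_integral_dyadic_shift_parameter[OF x, of g] by (simp add: J_def)
  finally show ?thesis by (simp add: M_def g_def)
qed

section \<open>Absorption and averaging\<close>

definition shift_defect :: "'n::finite \<Rightarrow> real \<Rightarrow> (real^'n \<Rightarrow> real) \<Rightarrow> real^'n \<Rightarrow> ennreal" where
  "shift_defect k \<alpha> u z =
     (\<integral>\<^sup>+x. ennreal ((u x - u (dyadic_shift k z x))^2 / (x$k) powr \<alpha>) * indicator (halfspace k) x \<partial>lborel)"

lemma hardy_integral_le_shift_defect:
  fixes u :: "real^'n::finite \<Rightarrow> real"
  assumes u[measurable]: "u \<in> borel_measurable borel" and z: "0 < z$k"
    and q: "(z$k) powr (\<alpha> - 1) \<le> q" and e: "0 < e" "0 \<le> q" "(1 + e) * q < 1"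
    and finite: "hardy_integral k \<alpha> u < \<infinity>"
  shows "ennreal (1 - (1 + e) * q) * hardy_integral k \<alpha> u \<le> ennreal (1 + 1/e) * shift_defect k \<alpha> u z"
proof -
  define F where "F x = ennreal ((u (dyadic_shift k z x))^2 / (x$k) powr \<alpha>) * indicator (halfspace k) x" for x
  define G where "G x = ennreal ((u x - u (dyadic_shift k z x))^2 / (x$k) powr \<alpha>) * indicator (halfspace k) x" for x
  have [measurable]: "F \<in> borel_measurable borel" "G \<in> borel_measurable borel"
    unfolding F_def G_def by measurable
  have pointwise: "ennreal ((u x)^2 / (x$k) powr \<alpha>) * indicator (halfspace k) x
      \<le> ennreal (1 + e) * F x + ennreal (1 + 1/e) * G x" for x
  proof (cases "x \<in> halfspace k")
    case True
    then have "0 < x$k" by (simp add: halfspace_def)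
    then have "(u x)^2 / (x$k) powr \<alpha>
        \<le> ((1 + e) * (u (dyadic_shift k z x))^2 + (1 + 1/e) * (u x - u (dyadic_shift k z x))^2) / (x$k) powr \<alpha>"
      using power2_le_weighted_split[OF e(1)] by (intro divide_right_mono) auto
    then show ?thesis
      using True e
      by (simp add: F_def G_def add_divide_distrib ennreal_leI ennreal_mult[symmetric] ennreal_plus[symmetric]
          del: ennreal_plus)
  qed simp
  have "hardy_integral k \<alpha> u \<le> (\<integral>\<^sup>+x. ennreal (1 + e) * F x + ennreal (1 + 1/e) * G x \<partial>lborel)"
    unfolding hardy_integral_def by (intro nn_integral_mono pointwise)
  also have "\<dots> = ennreal (1 + e) * (ennreal ((z$k) powr (\<alpha> - 1)) * hardy_integral k \<alpha> u)
      + ennreal (1 + 1/e) * shift_defect k \<alpha> u z"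
    using z by (simp add: nn_integral_add nn_integral_cmult F_def G_def shift_defect_def
        hardy_integral_dyadic_shift)
  also have "\<dots> \<le> ennreal ((1 + e) * q) * hardy_integral k \<alpha> u + ennreal (1 + 1/e) * shift_defect k \<alpha> u z"
    using q e by (simp add: mult.assoc[symmetric] ennreal_mult[symmetric] mult_right_mono ennreal_leI
        del: ennreal_plus)
  finally show ?thesis
    using ennreal_absorb_le finite e by (simp add: zero_le_mult_iff)
qed

lemma shift_defect_measurable[measurable]:
  fixes u :: "real^'n::finite \<Rightarrow> real"
  assumes [measurable]: "u \<in> borel_measurable borel"
  shows "shift_defect k \<alpha> u \<in> borel_measurable borel"
proof -
  have "(\<lambda>z. \<integral>\<^sup>+x. ennreal ((u x - u (dyadic_shift k z x))^2 / (x$k) powr \<alpha>) * indicator (halfspace k) x \<partial>lborel)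
      \<in> borel_measurable lborel"
    by (rule lborel.borel_measurable_nn_integral) simp
  then show ?thesis unfolding shift_defect_def[abs_def] by simp
qed

lemma nn_integral_shift_defect_le_near_energy:
  fixes u :: "real^'n::finite \<Rightarrow> real"
  defines "D \<equiv> real CARD('n)"
  assumes [measurable]: "u \<in> borel_measurable borel" and \<alpha>: "0 \<le> \<alpha>" and ab: "admissible_window a b"
  shows "(\<integral>\<^sup>+z. shift_defect k \<alpha> u z * indicator (window_box k a b) z \<partial>lborel)
     \<le> ennreal (2 powr D * (2*D) powr (D + \<alpha>)) * near_energy k \<alpha> (6*D) u"
proof -
  define h where "h z x = ennreal ((u x - u (dyadic_shift k z x))^2 / (x$k) powr \<alpha>) * indicator (halfspace k) x" for z x
  have [measurable]: "(\<lambda>(z, x). h z x) \<in> borel_measurable (borel \<Otimes>\<^sub>M borel)"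
    unfolding h_def by measurable
  have inner: "(\<integral>\<^sup>+z. h z x * indicator (window_box k a b) z \<partial>lborel)
      \<le> ennreal (2 powr D * (2*D) powr (D + \<alpha>)) * (\<integral>\<^sup>+y. ennreal ((u x - u y)^2 * near_kernel k \<alpha> (6*D) x y) \<partial>lborel)"
    for x
  proof (cases "x \<in> halfspace k")
    case True
    then show ?thesis
      using nn_integral_shift_difference_le_near_energy[of u x k \<alpha> a b] \<alpha> ab
      by (simp add: h_def halfspace_def D_def)
  qed (simp add: h_def)
  have "(\<integral>\<^sup>+z. shift_defect k \<alpha> u z * indicator (window_box k a b) z \<partial>lborel)
      = (\<integral>\<^sup>+z. \<integral>\<^sup>+x. h z x * indicator (window_box k a b) z \<partial>lborel \<partial>lborel)"
    unfolding shift_defect_def h_def by (intro nn_integral_cong) (simp add: nn_integral_multc)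
  also have "\<dots> = (\<integral>\<^sup>+x. \<integral>\<^sup>+z. h z x * indicator (window_box k a b) z \<partial>lborel \<partial>lborel)"
    by (rule lborel_pair.Fubini') simp
  also have "\<dots> \<le> (\<integral>\<^sup>+x. ennreal (2 powr D * (2*D) powr (D + \<alpha>))
      * (\<integral>\<^sup>+y. ennreal ((u x - u y)^2 * near_kernel k \<alpha> (6*D) x y) \<partial>lborel) \<partial>lborel)"
    by (intro nn_integral_mono inner)
  also have "\<dots> = ennreal (2 powr D * (2*D) powr (D + \<alpha>)) * near_energy k \<alpha> (6*D) u"
    unfolding near_energy_def by (rule nn_integral_cmult) measurable
  finally show ?thesis .
qed

lemma hardy_integral_le_near_energy_of_finite:
  fixes u :: "real^'n::finite \<Rightarrow> real"
  defines "D \<equiv> real CARD('n)"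
  assumes [measurable]: "u \<in> borel_measurable borel" and finite: "hardy_integral k \<alpha> u < \<infinity>"
    and \<alpha>: "0 \<le> \<alpha>" and ab: "admissible_window a b"
    and q: "\<And>s. a < s \<Longrightarrow> s < b \<Longrightarrow> s powr (\<alpha> - 1) \<le> q" and e: "0 < e" "0 \<le> q" "(1 + e) * q < 1"
  shows "ennreal ((1 - (1 + e) * q) * (\<Prod>i\<in>UNIV. if i = k then b - a else 2)) * hardy_integral k \<alpha> u
    \<le> ennreal ((1 + 1/e) * (2 powr D * (2*D) powr (D + \<alpha>))) * near_energy k \<alpha> (6*D) u"
proof -
  define V where "V = (\<Prod>i\<in>(UNIV::'n set). if i = k then b - a else 2)"
  define p where "p = (1 + e) * q"
  have ab': "a < b" using ab by (simp add: admissible_window_def)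
  have V0: "0 < V" unfolding V_def using ab' by (intro prod_pos) auto
  have step: "ennreal (1 - p) * hardy_integral k \<alpha> u \<le> ennreal (1 + 1/e) * shift_defect k \<alpha> u z"
    if "z \<in> window_box k a b" for z
    using that ab q e finite unfolding p_def
    by (intro hardy_integral_le_shift_defect) (auto simp: mem_window_box admissible_window_def)
  have "(\<integral>\<^sup>+z. ennreal (1 - p) * hardy_integral k \<alpha> u * indicator (window_box k a b) z \<partial>lborel)
      = ennreal (1 - p) * hardy_integral k \<alpha> u * ennreal V"
    using ab' by (simp add: nn_integral_cmult_indicator emeasure_window_box V_def)
  then have "ennreal ((1 - p) * V) * hardy_integral k \<alpha> u
      = (\<integral>\<^sup>+z. ennreal (1 - p) * hardy_integral k \<alpha> u * indicator (window_box k a b) z \<partial>lborel)"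
    using e V0 by (simp add: p_def ennreal_mult mult_ac)
  also have "\<dots> \<le> (\<integral>\<^sup>+z. ennreal (1 + 1/e) * (shift_defect k \<alpha> u z * indicator (window_box k a b) z) \<partial>lborel)"
    by (intro nn_integral_mono) (auto simp: step split: split_indicator)
  also have "\<dots> = ennreal (1 + 1/e) * (\<integral>\<^sup>+z. shift_defect k \<alpha> u z * indicator (window_box k a b) z \<partial>lborel)"
    by (rule nn_integral_cmult) measurable
  also have "\<dots> \<le> ennreal (1 + 1/e) * (ennreal (2 powr D * (2*D) powr (D + \<alpha>)) * near_energy k \<alpha> (6*D) u)"
    using nn_integral_shift_defect_le_near_energy[of u \<alpha> a b k] \<alpha> ab
    by (intro mult_left_mono) (auto simp: D_def)
  also have "\<dots> = ennreal ((1 + 1/e) * (2 powr D * (2*D) powr (D + \<alpha>))) * near_energy k \<alpha> (6*D) u"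
    using e by (simp add: ennreal_mult mult.assoc)
  finally show ?thesis by (simp add: p_def V_def)
qed

lemma hardy_integral_le_near_energy:
  assumes \<alpha>: "0 \<le> \<alpha>" and ab: "admissible_window a b"
    and q: "\<And>s. a < s \<Longrightarrow> s < b \<Longrightarrow> s powr (\<alpha> - 1) \<le> q" "0 \<le> q" "q < 1"
  shows "\<exists>K\<ge>0. \<forall>u :: real^'n::finite \<Rightarrow> real. u \<in> borel_measurable borel \<longrightarrow>
           hardy_integral k \<alpha> u < \<infinity> \<longrightarrow> hardy_integral k \<alpha> u \<le> ennreal K * near_energy k \<alpha> (6 * real CARD('n)) u"
proof -
  define D where "D = real CARD('n)"
  define M where "M = (1 + 2/(1 - q)) * (2 powr D * (2*D) powr (D + \<alpha>))"
  define V where "V = (1 - (1 + (1 - q) / 2) * q) * (\<Prod>i\<in>(UNIV::'n set). if i = k then b - a else 2)"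
  have e: "0 < (1 - q) / 2" using q by simp
  have "0 < (1 - q) * (2 - q)" using q by (intro mult_pos_pos) auto
  then have p: "(1 + (1 - q) / 2) * q < 1" by (simp add: field_simps power2_eq_square)
  have "0 < (\<Prod>i\<in>(UNIV::'n set). if i = k then b - a else 2)"
    using ab by (intro prod_pos) (auto simp: admissible_window_def)
  then have V: "0 < V" using p by (simp add: V_def)
  have "hardy_integral k \<alpha> u \<le> ennreal (M / V) * near_energy k \<alpha> (6*D) u"
    if "u \<in> borel_measurable borel" "hardy_integral k \<alpha> u < \<infinity>" for u :: "real^'n \<Rightarrow> real"
  proof -
    have "ennreal V * hardy_integral k \<alpha> u \<le> ennreal M * near_energy k \<alpha> (6*D) u"
      using hardy_integral_le_near_energy_of_finite[OF that \<alpha> ab q(1) e q(2) p]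
      by (simp add: M_def V_def D_def)
    then have "hardy_integral k \<alpha> u \<le> ennreal (1 / V) * (ennreal M * near_energy k \<alpha> (6*D) u)"
      by (rule ennreal_le_inverse_mult_if_mult_le[OF V])
    then show ?thesis
      using V q by (simp add: M_def ennreal_mult[symmetric] mult.assoc[symmetric])
  qed
  moreover have "0 \<le> M / V" using V q by (simp add: M_def)
  ultimately show ?thesis unfolding D_def by blast
qed

text \<open>This is the only place where \<open>\<alpha> \<noteq> 1\<close> is used.\<close>

lemma admissible_window_exists:
  assumes "\<alpha> \<noteq> 1"
  shows "\<exists>a b q. admissible_window a b \<and> 0 \<le> q \<and> q < 1 \<and> (\<forall>s. a < s \<longrightarrow> s < b \<longrightarrow> s powr (\<alpha> - 1) \<le> q)"
proof (cases "\<alpha> < 1")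
  case True
  have "s powr (\<alpha> - 1) \<le> 2 powr (\<alpha> - 1)" if "2 < s" for s
    using True that by (intro powr_mono2') auto
  moreover have "2 powr (\<alpha> - 1) < 1" using True by (intro powr_less_one) auto
  ultimately show ?thesis
    by (intro exI[of _ 2] exI[of _ 3] exI[of _ "2 powr (\<alpha> - 1)"]) (auto simp: admissible_window_def)
next
  case False
  then have \<alpha>: "1 < \<alpha>" using assms by simp
  have "s powr (\<alpha> - 1) \<le> (1/2) powr (\<alpha> - 1)" if "1/3 < s" "s < 1/2" for s
    using \<alpha> that by (intro powr_mono2) auto
  moreover have "(1/2::real) powr (\<alpha> - 1) < 1" using \<alpha> by (simp add: powr_divide)
  ultimately show ?thesis
    by (intro exI[of _ "1/3"] exI[of _ "1/2"] exI[of _ "(1/2) powr (\<alpha> - 1)"]) (auto simp: admissible_window_def)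
qed

section \<open>Comparison with the jump kernel\<close>

lemma Btilde_ge_near_diagonal:
  fixes x y :: "real^'n::finite"
  assumes x: "0 < x$k" and y: "0 < y$k" and xy: "x \<noteq> y" and near: "dist x y \<le> L * min (x$k) (y$k)"
    and L: "1 \<le> L" and b: "0 \<le> b1" "0 \<le> b2" "0 \<le> b3" "0 \<le> b4"
  shows "(1/L) powr b1 * (1/L) powr b2 * (ln 2) powr b3 * (ln 2) powr b4 \<le> Btilde k b1 b2 b3 b4 x y"
proof -
  define r where "r = dist x y"
  define m where "m = min (x$k) (y$k)"
  define M where "M = max (x$k) (y$k)"
  have r0: "0 < r" using xy by (simp add: r_def)
  have m0: "0 < m" using x y by (simp add: m_def)
  have mM: "m \<le> M" by (simp add: m_def M_def)
  have "r \<le> L * m" using near by (simp add: r_def m_def)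
  then have "1/L \<le> m/r" using r0 L m0 by (simp add: field_simps)
  then have f1: "1/L \<le> min (m/r) 1" using L by simp
  have "m/r \<le> M/r" using mM r0 by (simp add: divide_right_mono)
  then have f2: "1/L \<le> min (M/r) 1" using f1 by linarith
  have "1 \<le> min M r / min m r" using mM m0 r0 by simp
  then have f3: "ln 2 \<le> ln (1 + min M r / min m r)" by simp
  have "1 \<le> r / min M r" using m0 mM r0 by simp
  then have f4: "ln 2 \<le> ln (1 + r / min M r)" by simp
  have "(1/L) powr b1 * (1/L) powr b2 * (ln 2) powr b3 * (ln 2) powr b4
      \<le> (min (m/r) 1) powr b1 * (min (M/r) 1) powr b2 * (ln (1 + min M r / min m r)) powr b3
        * (ln (1 + r / min M r)) powr b4"
    using f1 f2 f3 f4 L b by (intro mult_mono powr_mono2) auto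
  then show ?thesis by (simp add: Btilde_def Let_def r_def m_def M_def)
qed

text \<open>\<open>B\<close> is not assumed measurable, so the constant is moved onto the \<open>near_energy\<close> side and only
  monotonicity of the integral is used on the \<open>Eform\<close> side.\<close>

lemma near_energy_le_Eform:
  fixes B :: "real^'n::finite \<Rightarrow> real^'n \<Rightarrow> real" and u :: "real^'n \<Rightarrow> real"
  assumes [measurable]: "u \<in> borel_measurable borel" and c: "0 < c"
    and B_ge: "\<And>x y. 0 < x$k \<Longrightarrow> 0 < y$k \<Longrightarrow> x \<noteq> y \<Longrightarrow> dist x y \<le> L * min (x$k) (y$k) \<Longrightarrow> c \<le> B x y"
  shows "near_energy k \<alpha> L u \<le> ennreal (2 / c) * Eform k \<alpha> B u"
proof -
  have pointwise: "ennreal c * ennreal ((u x - u y)^2 * near_kernel k \<alpha> L x y)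
      \<le> ennreal ((u x - u y)^2 * Jk \<alpha> B x y) * indicator (halfspace k) y" if "x \<in> halfspace k" for x y
  proof (cases "0 < y$k \<and> x \<noteq> y \<and> dist x y \<le> L * min (x$k) (y$k)")
    case True
    then have "c * ((u x - u y)^2 * near_kernel k \<alpha> L x y) \<le> B x y * ((u x - u y)^2 * near_kernel k \<alpha> L x y)"
      using that B_ge[of x y] near_kernel_nonneg[of k \<alpha> L x y] by (intro mult_right_mono) (auto simp: halfspace_def)
    also have "\<dots> = (u x - u y)^2 * Jk \<alpha> B x y"
      using True that by (simp add: near_kernel_def Jk_def halfspace_def)
    finally have "c * ((u x - u y)^2 * near_kernel k \<alpha> L x y) \<le> (u x - u y)^2 * Jk \<alpha> B x y" .
    then show ?thesis
      using True c near_kernel_nonneg[of k \<alpha> L x y]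
      by (simp add: halfspace_def ennreal_mult[symmetric] ennreal_leI)
  qed (auto simp: near_kernel_def)
  have "ennreal c * near_energy k \<alpha> L u
      = (\<integral>\<^sup>+x. \<integral>\<^sup>+y. ennreal c * ennreal ((u x - u y)^2 * near_kernel k \<alpha> L x y) \<partial>lborel \<partial>lborel)"
    unfolding near_energy_def
    by (subst nn_integral_cmult[symmetric], measurable)+
  also have "\<dots> \<le> (\<integral>\<^sup>+x. (\<integral>\<^sup>+y. ennreal ((u x - u y)^2 * Jk \<alpha> B x y) * indicator (halfspace k) y \<partial>lborel)
      * indicator (halfspace k) x \<partial>lborel)"
  proof (intro nn_integral_mono)
    fix x :: "real^'n"
    show "(\<integral>\<^sup>+y. ennreal c * ennreal ((u x - u y)^2 * near_kernel k \<alpha> L x y) \<partial>lborel)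
      \<le> (\<integral>\<^sup>+y. ennreal ((u x - u y)^2 * Jk \<alpha> B x y) * indicator (halfspace k) y \<partial>lborel) * indicator (halfspace k) x"
    proof (cases "x \<in> halfspace k")
      case True
      then show ?thesis using pointwise[OF True] by (simp add: nn_integral_mono)
    qed (simp add: near_kernel_def halfspace_def)
  qed
  also have "\<dots> = ennreal 2 * Eform k \<alpha> B u"
  proof -
    have "ennreal 2 * ennreal (1/2) = 1" using ennreal_mult[of 2 "1/2"] by simp
    then show ?thesis unfolding Eform_def by (simp only: mult.assoc[symmetric] mult_1_left)
  qed
  finally have "near_energy k \<alpha> L u \<le> ennreal (1 / c) * (ennreal 2 * Eform k \<alpha> B u)"
    by (rule ennreal_le_inverse_mult_if_mult_le[OF c])
  also have "\<dots> = ennreal (2 / c) * Eform k \<alpha> B u"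
  proof -
    have "ennreal (1 / c) * ennreal 2 = ennreal (2 / c)" using c ennreal_mult[of "1/c" 2] by simp
    then show ?thesis by (metis mult.assoc)
  qed
  finally show ?thesis .
qed

lemma near_energy_le_Eform_of_Btilde:
  fixes B :: "real^'n::finite \<Rightarrow> real^'n \<Rightarrow> real"
  assumes b: "0 \<le> b1" "0 \<le> b2" "0 \<le> b3" "0 \<le> b4" and L: "1 \<le> L"
    and B_ge: "\<exists>C\<ge>1. \<forall>x\<in>halfspace k. \<forall>y\<in>halfspace k. x \<noteq> y \<longrightarrow> Btilde k b1 b2 b3 b4 x y / C \<le> B x y"
  shows "\<exists>K\<ge>0. \<forall>v. v \<in> borel_measurable borel \<longrightarrow> near_energy k \<alpha> L v \<le> ennreal K * Eform k \<alpha> B v"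
proof -
  obtain C where C: "C \<ge> 1" and B_ge_C: "\<And>x y. x \<in> halfspace k \<Longrightarrow> y \<in> halfspace k \<Longrightarrow> x \<noteq> y \<Longrightarrow>
      Btilde k b1 b2 b3 b4 x y / C \<le> B x y"
    using B_ge by blast
  define c where "c = (1/L) powr b1 * (1/L) powr b2 * (ln 2) powr b3 * (ln 2) powr b4 / C"
  have c: "0 < c" using L C by (simp add: c_def)
  have c_le: "c \<le> B x y" if "0 < x$k" "0 < y$k" "x \<noteq> y" "dist x y \<le> L * min (x$k) (y$k)" for x y
  proof -
    have "c \<le> Btilde k b1 b2 b3 b4 x y / C"
      unfolding c_def using Btilde_ge_near_diagonal[OF that L b] C by (simp add: divide_right_mono)
    also have "\<dots> \<le> B x y" using B_ge_C[of x y] that by (simp add: halfspace_def)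
    finally show ?thesis .
  qed
  show ?thesis
    using near_energy_le_Eform[OF _ c c_le] c by (intro exI[of _ "2 / c"]) auto
qed

section \<open>Test functions and approximation\<close>

lemma Cc_inf_half_measurable:
  assumes "\<phi> \<in> Cc_inf_half k"
  shows "\<phi> \<in> borel_measurable borel"
proof -
  have "Ck 0 \<phi>" using assms by (simp add: Cc_inf_half_def smooth_def)
  then show ?thesis by (simp add: borel_measurable_continuous_onI)
qed

lemma hardy_integral_Cc_inf_half_finite:
  fixes \<phi> :: "real^'n::finite \<Rightarrow> real"
  assumes \<phi>: "\<phi> \<in> Cc_inf_half k" and \<alpha>: "0 \<le> \<alpha>"
  shows "hardy_integral k \<alpha> \<phi> < \<infinity>"
proof -
  define S where "S = closure {x. \<phi> x \<noteq> 0}"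
  have "Ck 0 \<phi>" and S: "compact S" "S \<subseteq> halfspace k"
    using \<phi> by (auto simp: Cc_inf_half_def S_def smooth_def)
  then have cont: "continuous_on UNIV \<phi>" by simp
  have zero: "\<phi> x = 0" if "x \<notin> S" for x
    using that closure_subset[of "{x. \<phi> x \<noteq> 0}"] by (auto simp: S_def)
  show ?thesis
  proof (cases "S = {}")
    case True
    then show ?thesis using zero by (simp add: hardy_integral_def)
  next
    case False
    have "continuous_on S (\<lambda>x. x$k)" by (intro continuous_intros)
    then obtain x0 where "x0 \<in> S" and x0_min: "\<And>y. y \<in> S \<Longrightarrow> x0$k \<le> y$k"
      using continuous_attains_inf[OF S(1) False] by blast
    then have d0: "0 < x0$k" using S by (auto simp: halfspace_def)
    have "bounded (\<phi> ` S)"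
      using compact_continuous_image[OF continuous_on_subset[OF cont] S(1)] compact_imp_bounded by auto
    then obtain M where M: "\<And>x. x \<in> S \<Longrightarrow> \<bar>\<phi> x\<bar> \<le> M" by (auto simp: bounded_real)
    have pointwise: "ennreal ((\<phi> x)^2 / (x$k) powr \<alpha>) * indicator (halfspace k) x
        \<le> ennreal (M^2 / (x0$k) powr \<alpha>) * indicator S x" for x
    proof (cases "x \<in> S")
      case True
      have "(\<phi> x)^2 \<le> M^2" using M[OF True] by (metis abs_le_square_iff abs_of_nonneg abs_ge_zero order_trans)
      moreover have "(x0$k) powr \<alpha> \<le> (x$k) powr \<alpha>" using x0_min[OF True] d0 \<alpha> by (intro powr_mono2) auto
      ultimately have "(\<phi> x)^2 / (x$k) powr \<alpha> \<le> M^2 / (x0$k) powr \<alpha>"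
        using d0 by (intro frac_le) auto
      then show ?thesis using True by (simp add: ennreal_leI split: split_indicator)
    qed (simp add: zero)
    have "hardy_integral k \<alpha> \<phi> \<le> (\<integral>\<^sup>+x. ennreal (M^2 / (x0$k) powr \<alpha>) * indicator S x \<partial>lborel)"
      unfolding hardy_integral_def by (intro nn_integral_mono pointwise)
    also have "\<dots> = ennreal (M^2 / (x0$k) powr \<alpha>) * emeasure lborel S"
      using S(1) by (simp add: nn_integral_cmult_indicator compact_imp_closed)
    also have "\<dots> < \<infinity>"
      using emeasure_bounded_finite[OF compact_imp_bounded[OF S(1)]] by (simp add: ennreal_mult_less_top)
    finally show ?thesis .
  qed
qed

lemma hardy_integral_le_near_energy_Cc_inf_half:
  fixes k :: "'n::finite"
  assumes \<alpha>: "0 \<le> \<alpha>" "\<alpha> \<noteq> 1"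
  shows "\<exists>K\<ge>0. \<forall>\<phi>\<in>Cc_inf_half k.
           hardy_integral k \<alpha> \<phi> \<le> ennreal K * near_energy k \<alpha> (6 * real CARD('n)) \<phi>"
proof -
  obtain a b q where "admissible_window a b" "0 \<le> q" "q < 1" "\<And>s. a < s \<Longrightarrow> s < b \<Longrightarrow> s powr (\<alpha> - 1) \<le> q"
    using admissible_window_exists[OF \<alpha>(2)] by blast
  then obtain K where "0 \<le> K" and K: "\<And>u :: real^'n \<Rightarrow> real. u \<in> borel_measurable borel \<Longrightarrow>
      hardy_integral k \<alpha> u < \<infinity> \<Longrightarrow> hardy_integral k \<alpha> u \<le> ennreal K * near_energy k \<alpha> (6 * real CARD('n)) u"
    using hardy_integral_le_near_energy[OF \<alpha>(1)] by metis
  then show ?thesis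
    using Cc_inf_half_measurable hardy_integral_Cc_inf_half_finite[OF _ \<alpha>(1)] by blast
qed

lemma near_energy_le_twice:
  fixes u v :: "real^'n::finite \<Rightarrow> real"
  assumes [measurable]: "u \<in> borel_measurable borel" "v \<in> borel_measurable borel"
  shows "near_energy k \<alpha> L v \<le> 2 * near_energy k \<alpha> L u + 2 * near_energy k \<alpha> L (\<lambda>x. u x - v x)"
proof -
  define f where "f w x y = ennreal ((w x - w y)^2 * near_kernel k \<alpha> L x y)" for w :: "real^'n \<Rightarrow> real" and x y
  have [measurable]: "f u x \<in> borel_measurable borel" "f (\<lambda>x. u x - v x) x \<in> borel_measurable borel" for x
    unfolding f_def by measurable
  have [measurable]: "(\<lambda>x. \<integral>\<^sup>+y. f w x y \<partial>lborel) \<in> borel_measurable borel"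
    if [measurable]: "w \<in> borel_measurable borel" for w
    unfolding f_def by measurable
  have pointwise: "f v x y \<le> 2 * f u x y + 2 * f (\<lambda>x. u x - v x) x y" for x y
  proof -
    have "(v x - v y)^2 \<le> 2 * (u x - u y)^2 + 2 * ((u x - v x) - (u y - v y))^2"
      using power2_le_weighted_split[of 1 "v x - v y" "u x - u y"] by (simp add: power2_commute algebra_simps)
    then have "(v x - v y)^2 * near_kernel k \<alpha> L x y
        \<le> 2 * ((u x - u y)^2 * near_kernel k \<alpha> L x y) + 2 * (((u x - v x) - (u y - v y))^2 * near_kernel k \<alpha> L x y)"
      using near_kernel_nonneg[of k \<alpha> L x y] by (simp add: mult_right_mono flip: distrib_right mult.assoc)
    then have "f v x y \<le> ennreal (2 * ((u x - u y)^2 * near_kernel k \<alpha> L x y)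
        + 2 * (((u x - v x) - (u y - v y))^2 * near_kernel k \<alpha> L x y))"
      unfolding f_def by (rule ennreal_leI)
    then show ?thesis
      using near_kernel_nonneg[of k \<alpha> L x y] by (simp add: f_def ennreal_plus ennreal_mult)
  qed
  have "near_energy k \<alpha> L v \<le> (\<integral>\<^sup>+x. \<integral>\<^sup>+y. 2 * f u x y + 2 * f (\<lambda>x. u x - v x) x y \<partial>lborel \<partial>lborel)"
    unfolding near_energy_def f_def[symmetric] by (intro nn_integral_mono pointwise)
  also have "\<dots> = 2 * (\<integral>\<^sup>+x. \<integral>\<^sup>+y. f u x y \<partial>lborel \<partial>lborel)
      + 2 * (\<integral>\<^sup>+x. \<integral>\<^sup>+y. f (\<lambda>x. u x - v x) x y \<partial>lborel \<partial>lborel)"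
    by (simp add: nn_integral_add nn_integral_cmult)
  also have "\<dots> = 2 * near_energy k \<alpha> L u + 2 * near_energy k \<alpha> L (\<lambda>x. u x - v x)"
    by (simp add: near_energy_def f_def)
  finally show ?thesis .
qed

definition hardy_integral_above :: "'n::finite \<Rightarrow> real \<Rightarrow> real \<Rightarrow> (real^'n \<Rightarrow> real) \<Rightarrow> ennreal" where
  "hardy_integral_above k \<alpha> \<delta> u = (\<integral>\<^sup>+x. ennreal ((u x)^2 / (x$k) powr \<alpha>) * indicator {x. \<delta> < x$k} x \<partial>lborel)"

lemma hardy_integral_eq_SUP_above:
  fixes u :: "real^'n::finite \<Rightarrow> real"
  assumes [measurable]: "u \<in> borel_measurable borel"
  shows "hardy_integral k \<alpha> u = (SUP n. hardy_integral_above k \<alpha> (1 / Suc n) u)"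
proof -
  define f where "f n x = ennreal ((u x)^2 / (x$k) powr \<alpha>) * indicator {x. 1 / real (Suc n) < x$k} x" for n x
  have [measurable]: "f n \<in> borel_measurable borel" for n
    unfolding f_def by measurable
  have "incseq f"
    unfolding f_def by (intro incseq_SucI le_funI mult_left_mono)
      (auto split: split_indicator simp: frac_le order_le_less_trans[rotated])
  moreover have SUP_f: "(SUP n. f n x) = ennreal ((u x)^2 / (x$k) powr \<alpha>) * indicator (halfspace k) x" for x
  proof (cases "0 < x$k")
    case True
    then obtain N where "inverse (real (Suc N)) < x$k" using reals_Archimedean by blast
    then have "f N x = ennreal ((u x)^2 / (x$k) powr \<alpha>) * indicator (halfspace k) x"
      using True by (simp add: f_def halfspace_def inverse_eq_divide)
    then show ?thesis
      using True by (intro antisym SUP_least SUP_upper2[where i=N])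
        (auto simp: f_def halfspace_def split: split_indicator)
  next
    case False
    then have "\<not> 1 / real (Suc n) < x$k" for n
      by (meson less_trans of_nat_0_less_iff zero_less_Suc divide_pos_pos zero_less_one not_less)
    then show ?thesis using False by (simp add: f_def halfspace_def)
  qed
  ultimately have "hardy_integral k \<alpha> u = (SUP n. \<integral>\<^sup>+x. f n x \<partial>lborel)"
    unfolding hardy_integral_def SUP_f[symmetric] by (intro nn_integral_monotone_convergence_SUP) auto
  then show ?thesis by (simp add: hardy_integral_above_def f_def)
qed

lemma hardy_integral_above_le_L2:
  fixes u \<phi> :: "real^'n::finite \<Rightarrow> real"
  assumes [measurable]: "u \<in> borel_measurable borel" "\<phi> \<in> borel_measurable borel" and \<delta>: "0 < \<delta>" and \<alpha>: "0 \<le> \<alpha>"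
  shows "hardy_integral_above k \<alpha> \<delta> u
     \<le> 2 * hardy_integral k \<alpha> \<phi> + ennreal (2 / \<delta> powr \<alpha>) * (\<integral>\<^sup>+x. ennreal ((u x - \<phi> x)^2) * indicator (halfspace k) x \<partial>lborel)"
proof -
  have pointwise: "ennreal ((u x)^2 / (x$k) powr \<alpha>) * indicator {x. \<delta> < x$k} x
      \<le> 2 * (ennreal ((\<phi> x)^2 / (x$k) powr \<alpha>) * indicator (halfspace k) x)
        + ennreal (2 / \<delta> powr \<alpha>) * (ennreal ((u x - \<phi> x)^2) * indicator (halfspace k) x)" for x
  proof (cases "\<delta> < x$k")
    case True
    then have x: "x \<in> halfspace k" using \<delta> by (simp add: halfspace_def)
    have "(u x)^2 \<le> 2 * (\<phi> x)^2 + 2 * (u x - \<phi> x)^2"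
      using power2_le_weighted_split[of 1 "u x" "\<phi> x"] by simp
    then have "(u x)^2 / (x$k) powr \<alpha> \<le> (2 * (\<phi> x)^2 + 2 * (u x - \<phi> x)^2) / (x$k) powr \<alpha>"
      by (rule divide_right_mono) simp
    moreover have "2 * (u x - \<phi> x)^2 / (x$k) powr \<alpha> \<le> 2 / \<delta> powr \<alpha> * (u x - \<phi> x)^2"
      using True \<delta> \<alpha> by (simp add: divide_left_mono powr_mono2 mult_pos_pos)
    ultimately have "ennreal ((u x)^2 / (x$k) powr \<alpha>)
        \<le> ennreal (2 * ((\<phi> x)^2 / (x$k) powr \<alpha>) + 2 / \<delta> powr \<alpha> * (u x - \<phi> x)^2)"
      by (intro ennreal_leI) (simp add: add_divide_distrib)
    also have "\<dots> = 2 * ennreal ((\<phi> x)^2 / (x$k) powr \<alpha>) + ennreal (2 / \<delta> powr \<alpha>) * ennreal ((u x - \<phi> x)^2)"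
      using ennreal_mult[of 2 "(\<phi> x)^2 / (x$k) powr \<alpha>"] ennreal_mult[of "2 / \<delta> powr \<alpha>" "(u x - \<phi> x)^2"]
      by (subst ennreal_plus) simp_all
    finally show ?thesis using True x by simp
  qed simp
  have "hardy_integral_above k \<alpha> \<delta> u \<le> (\<integral>\<^sup>+x. 2 * (ennreal ((\<phi> x)^2 / (x$k) powr \<alpha>) * indicator (halfspace k) x)
      + ennreal (2 / \<delta> powr \<alpha>) * (ennreal ((u x - \<phi> x)^2) * indicator (halfspace k) x) \<partial>lborel)"
    unfolding hardy_integral_above_def by (intro nn_integral_mono pointwise)
  also have "\<dots> = 2 * hardy_integral k \<alpha> \<phi>
      + ennreal (2 / \<delta> powr \<alpha>) * (\<integral>\<^sup>+x. ennreal ((u x - \<phi> x)^2) * indicator (halfspace k) x \<partial>lborel)"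
    unfolding hardy_integral_def by (simp add: nn_integral_add nn_integral_cmult)
  finally show ?thesis .
qed

lemma hardy_integral_above_le_near_energy_approx:
  fixes u \<phi> :: "real^'n::finite \<Rightarrow> real"
  assumes [measurable]: "u \<in> borel_measurable borel" "\<phi> \<in> borel_measurable borel"
    and \<delta>: "0 < \<delta>" and \<alpha>: "0 \<le> \<alpha>"
    and test: "hardy_integral k \<alpha> \<phi> \<le> ennreal K2 * near_energy k \<alpha> L \<phi>"
    and energy: "near_energy k \<alpha> L (\<lambda>x. u x - \<phi> x) \<le> ennreal K1 * Eform k \<alpha> B (\<lambda>x. u x - \<phi> x)"
  shows "hardy_integral_above k \<alpha> \<delta> u \<le> 4 * ennreal K2 * near_energy k \<alpha> L u
    + (4 * ennreal K2 * ennreal K1 + ennreal (2 / \<delta> powr \<alpha>)) * E1form k \<alpha> B (\<lambda>x. u x - \<phi> x)"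
proof -
  define F where "F = E1form k \<alpha> B (\<lambda>x. u x - \<phi> x)"
  have "Eform k \<alpha> B (\<lambda>x. u x - \<phi> x) \<le> F"
    by (simp add: F_def E1form_def)
  then have "near_energy k \<alpha> L (\<lambda>x. u x - \<phi> x) \<le> ennreal K1 * F"
    using energy by (meson mult_left_mono order_trans zero_le)
  moreover have "near_energy k \<alpha> L \<phi> \<le> 2 * near_energy k \<alpha> L u + 2 * near_energy k \<alpha> L (\<lambda>x. u x - \<phi> x)"
    by (rule near_energy_le_twice) measurable
  ultimately have "near_energy k \<alpha> L \<phi> \<le> 2 * near_energy k \<alpha> L u + 2 * (ennreal K1 * F)"
    by (meson add_left_mono mult_left_mono order_trans zero_le)
  then have test_bound: "hardy_integral k \<alpha> \<phi> \<le> ennreal K2 * (2 * near_energy k \<alpha> L u + 2 * (ennreal K1 * F))"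
    using test by (meson mult_left_mono order_trans zero_le)
  have L2_le: "(\<integral>\<^sup>+x. ennreal ((u x - \<phi> x)^2) * indicator (halfspace k) x \<partial>lborel) \<le> F"
    by (auto simp: F_def E1form_def intro: add_increasing)
  have "hardy_integral_above k \<alpha> \<delta> u \<le> 2 * hardy_integral k \<alpha> \<phi>
      + ennreal (2 / \<delta> powr \<alpha>) * (\<integral>\<^sup>+x. ennreal ((u x - \<phi> x)^2) * indicator (halfspace k) x \<partial>lborel)"
    using \<delta> \<alpha> by (intro hardy_integral_above_le_L2) measurable
  also have "\<dots> \<le> 2 * (ennreal K2 * (2 * near_energy k \<alpha> L u + 2 * (ennreal K1 * F))) + ennreal (2 / \<delta> powr \<alpha>) * F"
    using test_bound L2_le by (intro add_mono mult_left_mono) auto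
  also have "\<dots> = 4 * ennreal K2 * near_energy k \<alpha> L u + (4 * ennreal K2 * ennreal K1 + ennreal (2 / \<delta> powr \<alpha>)) * F"
    by (simp add: algebra_simps)
  finally show ?thesis by (simp add: F_def)
qed

lemma hardy_integral_le_Eform_Fdom:
  assumes \<alpha>: "0 \<le> \<alpha>" and K1: "0 \<le> K1" and K2: "0 \<le> K2"
    and test: "\<And>\<phi>. \<phi> \<in> Cc_inf_half k \<Longrightarrow> hardy_integral k \<alpha> \<phi> \<le> ennreal K2 * near_energy k \<alpha> L \<phi>"
    and energy: "\<And>v. v \<in> borel_measurable borel \<Longrightarrow> near_energy k \<alpha> L v \<le> ennreal K1 * Eform k \<alpha> B v"
    and u: "u \<in> Fdom k \<alpha> B"
  shows "hardy_integral k \<alpha> u \<le> ennreal (4 * K2 * K1) * Eform k \<alpha> B u"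
proof -
  obtain \<phi> where \<phi>: "\<And>j. \<phi> j \<in> Cc_inf_half k"
    and lim: "(\<lambda>j. E1form k \<alpha> B (\<lambda>x. u x - \<phi> j x)) \<longlonglongrightarrow> 0"
    and "u \<in> borel_measurable lborel"
    using u by (auto simp: Fdom_def)
  then have [measurable]: "u \<in> borel_measurable borel" "\<phi> j \<in> borel_measurable borel" for j
    using Cc_inf_half_measurable by auto
  have above: "hardy_integral_above k \<alpha> \<delta> u \<le> 4 * ennreal K2 * near_energy k \<alpha> L u" if \<delta>: "0 < \<delta>" for \<delta>
  proof -
    define C where "C = 4 * ennreal K2 * ennreal K1 + ennreal (2 / \<delta> powr \<alpha>)"
    have "4 * ennreal K2 * ennreal K1 = ennreal (4 * K2 * K1)"
      using K1 K2 by (simp add: ennreal_mult)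
    then have "C < \<infinity>" by (simp add: C_def)
    then have "(\<lambda>j. 4 * ennreal K2 * near_energy k \<alpha> L u + C * E1form k \<alpha> B (\<lambda>x. u x - \<phi> j x))
        \<longlonglongrightarrow> 4 * ennreal K2 * near_energy k \<alpha> L u + C * 0"
      by (intro tendsto_add tendsto_const ennreal_tendsto_cmult lim) auto
    moreover have "hardy_integral_above k \<alpha> \<delta> u
        \<le> 4 * ennreal K2 * near_energy k \<alpha> L u + C * E1form k \<alpha> B (\<lambda>x. u x - \<phi> j x)" for j
      unfolding C_def using \<delta> \<alpha> test[OF \<phi>] energy
      by (intro hardy_integral_above_le_near_energy_approx) measurable
    ultimately show ?thesis by (intro LIMSEQ_le_const) auto
  qed
  have "hardy_integral k \<alpha> u = (SUP n. hardy_integral_above k \<alpha> (1 / Suc n) u)"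
    by (rule hardy_integral_eq_SUP_above) measurable
  also have "\<dots> \<le> 4 * ennreal K2 * near_energy k \<alpha> L u"
    by (intro SUP_least above) simp
  also have "\<dots> \<le> 4 * ennreal K2 * (ennreal K1 * Eform k \<alpha> B u)"
    by (intro mult_left_mono energy) auto
  also have "\<dots> = ennreal (4 * K2 * K1) * Eform k \<alpha> B u"
    using K1 K2 by (simp add: ennreal_mult mult.assoc)
  finally show ?thesis .
qed

theorem proposition3p2:
  fixes k :: "'n::finite" and \<alpha> \<beta>1 \<beta>2 \<beta>3 \<beta>4 :: real
    and B :: "real ^ 'n \<Rightarrow> real ^ 'n \<Rightarrow> real"
  assumes alpha: "0 < \<alpha>" "\<alpha> < 2" "\<alpha> \<noteq> 1"
    and betas: "\<beta>1 \<ge> 0" "\<beta>2 \<ge> 0" "\<beta>3 \<ge> 0" "\<beta>4 \<ge> 0"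
    and b13: "\<beta>3 > 0 \<Longrightarrow> \<beta>1 > 0" and b24: "\<beta>4 > 0 \<Longrightarrow> \<beta>2 > 0"
    and Bnonneg: "\<And>x y. x \<in> halfspace k \<Longrightarrow> y \<in> halfspace k \<Longrightarrow> B x y \<ge> 0"
    and A1: "\<And>x y. x \<in> halfspace k \<Longrightarrow> y \<in> halfspace k \<Longrightarrow> B x y = B y x"
    and A2: "\<alpha> \<ge> 1 \<Longrightarrow> \<exists>\<theta> C. \<theta> > \<alpha> - 1 \<and> C > 0 \<and>
               (\<forall>x\<in>halfspace k. \<forall>y\<in>halfspace k.
                  \<bar>B x x - B x y\<bar> \<le> C * (dist x y / min (x $ k) (y $ k)) powr \<theta>)"
    and A3: "\<exists>C\<ge>1. \<forall>x\<in>halfspace k. \<forall>y\<in>halfspace k. x \<noteq> y \<longrightarrow>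
               Btilde k \<beta>1 \<beta>2 \<beta>3 \<beta>4 x y / C \<le> B x y \<and> B x y \<le> C * Btilde k \<beta>1 \<beta>2 \<beta>3 \<beta>4 x y"
    and A4_scale: "\<And>a x y. a > 0 \<Longrightarrow> x \<in> halfspace k \<Longrightarrow> y \<in> halfspace k \<Longrightarrow>
               B (a *\<^sub>R x) (a *\<^sub>R y) = B x y"
    and A4_transl: "\<And>z x y. z $ k = 0 \<Longrightarrow> x \<in> halfspace k \<Longrightarrow> y \<in> halfspace k \<Longrightarrow>
               B (x + z) (y + z) = B x y"
    and Bdiag: "\<And>x. x \<in> halfspace k \<Longrightarrow> B x x = 1"
  shows "\<exists>C>0. \<forall>u\<in>Fdom k \<alpha> B.
           Eform k \<alpha> B u \<ge> ennreal C *
             (\<integral>\<^sup>+ x. ennreal ((u x)^2 / (x $ k) powr \<alpha>) * indicator (halfspace k) x \<partial>lborel)"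
proof -
  define L where "L = 6 * real CARD('n)"
  have "1 \<le> real CARD('n)" by (simp add: Suc_le_eq)
  then have L: "1 \<le> L" unfolding L_def by linarith
  have "\<exists>K\<ge>0. \<forall>v. v \<in> borel_measurable borel \<longrightarrow> near_energy k \<alpha> L v \<le> ennreal K * Eform k \<alpha> B v"
    using A3 by (intro near_energy_le_Eform_of_Btilde[OF betas L]) blast
  then obtain K1 where K1: "0 \<le> K1"
    and energy: "\<And>v. v \<in> borel_measurable borel \<Longrightarrow> near_energy k \<alpha> L v \<le> ennreal K1 * Eform k \<alpha> B v"
    by blast
  obtain K2 where K2: "0 \<le> K2"
    and test: "\<And>\<phi>. \<phi> \<in> Cc_inf_half k \<Longrightarrow> hardy_integral k \<alpha> \<phi> \<le> ennreal K2 * near_energy k \<alpha> L \<phi>"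
    using hardy_integral_le_near_energy_Cc_inf_half[of \<alpha> k] alpha by (auto simp: L_def)
  have K: "0 \<le> 4 * K2 * K1" using K1 K2 by simp
  show ?thesis
  proof (intro exI[of _ "1 / (4 * K2 * K1 + 1)"] conjI ballI)
    show "0 < 1 / (4 * K2 * K1 + 1)" using K by (simp add: add_nonneg_pos)
    fix u assume u: "u \<in> Fdom k \<alpha> B"
    have "hardy_integral k \<alpha> u \<le> ennreal (4 * K2 * K1) * Eform k \<alpha> B u"
      using alpha(1) by (intro hardy_integral_le_Eform_Fdom[OF _ K1 K2 test energy u]) simp
    then show "ennreal (1 / (4 * K2 * K1 + 1)) *
        (\<integral>\<^sup>+ x. ennreal ((u x)^2 / (x $ k) powr \<alpha>) * indicator (halfspace k) x \<partial>lborel) \<le> Eform k \<alpha> B u"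
      using ennreal_inverse_add_one_mult_le[OF K] by (simp add: hardy_integral_def)
  qed
qed

end
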